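(* Let $G$ be a graph with nonnegative edge costs, with distinguished vertices $start$ and $goal$, and let $c(x,y)$ denote the cost of a cheapest path from $x$ to $y$. Let $h_F$ and $h_B$ be nonnegative heuristic functions that are admissible and consistent (forward and backward, respectively). Fix real numbers $W \ge 1$ and $\lambda \le W$. For a direction $D \in \{F,B\}$ with opposite direction $\bar D$, and a node $n$ reached in direction $D$ with cost $g_D(n)$, define $b_D(n) = g_D(n) + h_D(n) + (g_D(n) - h_{\bar D}(n))$ and $b_{W_D}(n) = g_D(n) + W\cdot h_D(n) + \lambda\cdot (g_D(n) - h_{\bar D}(n))$. Then $b_{W_D}(n) \le W \cdot b_D(n)$ for every such node $n$ and every direction $D$.
   Context: The forward search starts at $start$ and the backward search at $goal$. For a node $n$ reached in the forward direction, $g_F(n)$ is the cost of the path from $start$ to $n$ by which it was reached; for the backward direction, $g_B(n)$ is the cost of the path from $n$ to $goal$ by which it was reached. $h_F(s)$ estimates $c(s,goal)$ and $h_B(s)$ estimates $c(start,s)$. $h_F$ is forward admissible if $h_F(s)\le c(s,goal)$ for all $s$, and forward consistent if $h_F(s)\le c(s,s')+h_F(s')$ for all $s,s'$; backward admissibility and consistency of $h_B$ are defined analogously ($h_B(s)\le c(start,s)$, and $h_B(s')\le c(s,s')+h_B(s)$). *)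

theory Defs
  imports Complex_Main "HOL-Library.Extended_Real"
begin

definition is_path :: "('v \<times> 'v) set \<Rightarrow> 'v \<Rightarrow> 'v \<Rightarrow> 'v list \<Rightarrow> bool" where
  "is_path E x y p \<longleftrightarrow> p \<noteq> [] \<and> hd p = x \<and> last p = y \<and>
     (\<forall>i. Suc i < length p \<longrightarrow> (p ! i, p ! Suc i) \<in> E)"

definition path_cost :: "('v \<times> 'v \<Rightarrow> real) \<Rightarrow> 'v list \<Rightarrow> real" where
  "path_cost cost p = (\<Sum>i | Suc i < length p. cost (p ! i, p ! Suc i))"

text \<open>Cost of a cheapest path (infinity if there is none).\<close>
definition dist :: "('v \<times> 'v) set \<Rightarrow> ('v \<times> 'v \<Rightarrow> real) \<Rightarrow> 'v \<Rightarrow> 'v \<Rightarrow> ereal" where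
  "dist E cost x y = (INF p \<in> {p. is_path E x y p}. ereal (path_cost cost p))"

datatype direction = Fwd | Bwd

fun opp :: "direction \<Rightarrow> direction" where
  "opp Fwd = Bwd" | "opp Bwd = Fwd"

fun heur :: "('v \<Rightarrow> real) \<Rightarrow> ('v \<Rightarrow> real) \<Rightarrow> direction \<Rightarrow> 'v \<Rightarrow> real" where
  "heur hF hB Fwd = hF" | "heur hF hB Bwd = hB"

fun reached :: "('v \<times> 'v) set \<Rightarrow> ('v \<times> 'v \<Rightarrow> real) \<Rightarrow> 'v \<Rightarrow> 'v \<Rightarrow> direction \<Rightarrow> 'v \<Rightarrow> real \<Rightarrow> bool" where
  "reached E cost start goal Fwd n g \<longleftrightarrow> (\<exists>p. is_path E start n p \<and> path_cost cost p = g)"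
| "reached E cost start goal Bwd n g \<longleftrightarrow> (\<exists>p. is_path E n goal p \<and> path_cost cost p = g)"

definition b_val :: "('v \<Rightarrow> real) \<Rightarrow> ('v \<Rightarrow> real) \<Rightarrow> direction \<Rightarrow> 'v \<Rightarrow> real \<Rightarrow> real" where
  "b_val hF hB D n g = g + heur hF hB D n + (g - heur hF hB (opp D) n)"

definition bW_val :: "real \<Rightarrow> real \<Rightarrow> ('v \<Rightarrow> real) \<Rightarrow> ('v \<Rightarrow> real) \<Rightarrow> direction \<Rightarrow> 'v \<Rightarrow> real \<Rightarrow> real" where
  "bW_val W lam hF hB D n g = g + W * heur hF hB D n + lam * (g - heur hF hB (opp D) n)"

end

theory Submission
  imports Defs
begin

text \<open>The difference W b_D(n) - b_WD(n) equals (W - 1) g_D(n) + (W - \<lambda>) (g_D(n) - h_opp(n)),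
  where h_opp is the heuristic of the opposite direction. Both terms are nonnegative: path costs
  are nonnegative, and h_opp(n) estimates exactly the cost of the path by which n was reached
  (from start to n for forward nodes, from n to goal for backward nodes), so admissibility
  gives h_opp(n) \<le> g_D(n).\<close>

lemma path_cost_nonneg:
  assumes "\<forall>e\<in>E. cost e \<ge> 0" and "is_path E x y p"
  shows "path_cost cost p \<ge> 0"
  unfolding path_cost_def
  by (rule sum_nonneg) (use assms in \<open>auto simp: is_path_def\<close>)

lemma dist_le_path_cost:
  assumes "is_path E x y p"
  shows "dist E cost x y \<le> ereal (path_cost cost p)"
  unfolding dist_def by (rule INF_lower) (use assms in auto)

lemma reached_cost_nonneg:
  assumes "\<forall>e\<in>E. cost e \<ge> 0" and "reached E cost start goal D n g"
  shows "g \<ge> 0"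
  using assms by (cases D) (auto intro: path_cost_nonneg)

lemma reached_opp_heur_le:
  assumes hF_adm: "\<forall>s. ereal (hF s) \<le> dist E cost s goal"
    and hB_adm: "\<forall>s. ereal (hB s) \<le> dist E cost start s"
    and "reached E cost start goal D n g"
  shows "heur hF hB (opp D) n \<le> g"
proof -
  obtain x y p where p: "is_path E x y p" "path_cost cost p = g"
    and h: "ereal (heur hF hB (opp D) n) \<le> dist E cost x y"
    using assms by (cases D) auto
  have "ereal (heur hF hB (opp D) n) \<le> ereal g"
    using h dist_le_path_cost[OF p(1), of cost] p(2) by (metis order_trans)
  then show ?thesis by simp
qed

lemma bW_val_le_W_times_b_val:
  assumes "g \<ge> 0" and "heur hF hB (opp D) n \<le> g" and "W \<ge> 1" and "lam \<le> W"
  shows "bW_val W lam hF hB D n g \<le> W * b_val hF hB D n g"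
proof -
  have "0 \<le> (W - 1) * g + (W - lam) * (g - heur hF hB (opp D) n)"
    using assms by simp
  then show ?thesis unfolding bW_val_def b_val_def by (simp add: algebra_simps)
qed

theorem lemma1:
  fixes E :: "('v \<times> 'v) set" and cost :: "'v \<times> 'v \<Rightarrow> real"
    and start goal :: 'v and hF hB :: "'v \<Rightarrow> real" and W lam :: real
  assumes cost_nonneg: "\<forall>e\<in>E. cost e \<ge> 0"
    and hF_nonneg: "\<forall>s. hF s \<ge> 0" and hB_nonneg: "\<forall>s. hB s \<ge> 0"
    and hF_adm: "\<forall>s. ereal (hF s) \<le> dist E cost s goal"
    and hF_cons: "\<forall>s s'. ereal (hF s) \<le> dist E cost s s' + ereal (hF s')"
    and hB_adm: "\<forall>s. ereal (hB s) \<le> dist E cost start s"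
    and hB_cons: "\<forall>s s'. ereal (hB s') \<le> dist E cost s s' + ereal (hB s)"
    and W: "W \<ge> 1" and lam: "lam \<le> W"
  shows "\<forall>D n g. reached E cost start goal D n g \<longrightarrow>
           bW_val W lam hF hB D n g \<le> W * b_val hF hB D n g"
proof (intro allI impI)
  fix D n g
  assume reached: "reached E cost start goal D n g"
  show "bW_val W lam hF hB D n g \<le> W * b_val hF hB D n g"
  proof (rule bW_val_le_W_times_b_val)
    show "g \<ge> 0" using reached_cost_nonneg[OF cost_nonneg reached] .
    show "heur hF hB (opp D) n \<le> g" using reached_opp_heur_le[OF hF_adm hB_adm reached] .
  qed (use W lam in auto)
qed

end
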